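(* Let $H$ be a graph with vertex set $A\cup B\cup\{v\}$, where $A$, $B$, $\{v\}$ are pairwise disjoint, $A$ is an independent set or a clique, $A$ and $B$ are complete to each other, and $v$ has both a neighbour and a non-neighbour in $A$. Let $F$ be a spanning subgraph of $H$ obtained from $H$ by removing some (possibly all) of the edges between $v$ and vertices of $A$. Then $H\xrightarrow{\cap} F$.
   Context: All graphs are finite and simple. For graphs $G_1=(V_1,E_1)$, $G_2=(V_2,E_2)$, $G_1\cap G_2=(V_1\cap V_2, E_1\cap E_2)$. For a graph $G=(V,E)$ and an injective map $\alpha$ on $V$, $G^{\alpha}$ has vertex set $\alpha(V)$ and edge set $\{\{\alpha(v),\alpha(w)\}: \{v,w\}\in E\}$. We write $G\xrightarrow{\cap} H$ if $H=G^{\alpha_1}\cap\cdots\cap G^{\alpha_k}$ for some $k\ge1$ and injective maps $\alpha_1,\dots,\alpha_k$ on $V(G)$. Sets are complete to each other if every vertex of one is adjacent to every vertex of the other. *)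

theory Defs
  imports Main
begin

type_synonym 'a graph = "'a set \<times> 'a set set"

definition simple_graph :: "'a graph \<Rightarrow> bool" where
  "simple_graph G \<longleftrightarrow> finite (fst G) \<and>
     (\<forall>e\<in>snd G. \<exists>x y. x \<noteq> y \<and> x \<in> fst G \<and> y \<in> fst G \<and> e = {x, y})"

definition adj :: "'a graph \<Rightarrow> 'a \<Rightarrow> 'a \<Rightarrow> bool" where
  "adj G x y \<longleftrightarrow> {x, y} \<in> snd G"

definition independent_set :: "'a graph \<Rightarrow> 'a set \<Rightarrow> bool" where
  "independent_set G S \<longleftrightarrow> (\<forall>x\<in>S. \<forall>y\<in>S. \<not> adj G x y)"

definition clique :: "'a graph \<Rightarrow> 'a set \<Rightarrow> bool" where
  "clique G S \<longleftrightarrow> (\<forall>x\<in>S. \<forall>y\<in>S. x \<noteq> y \<longrightarrow> adj G x y)"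

definition complete_to :: "'a graph \<Rightarrow> 'a set \<Rightarrow> 'a set \<Rightarrow> bool" where
  "complete_to G S T \<longleftrightarrow> (\<forall>x\<in>S. \<forall>y\<in>T. adj G x y)"

definition graph_image :: "('a \<Rightarrow> 'a) \<Rightarrow> 'a graph \<Rightarrow> 'a graph" where
  "graph_image \<alpha> G = (\<alpha> ` fst G, (\<lambda>e. \<alpha> ` e) ` snd G)"

definition graph_Inter :: "nat \<Rightarrow> (nat \<Rightarrow> 'a graph) \<Rightarrow> 'a graph" where
  "graph_Inter k Gs = (\<Inter>i\<in>{..<k}. fst (Gs i), \<Inter>i\<in>{..<k}. snd (Gs i))"

definition inter_derives :: "'a graph \<Rightarrow> 'a graph \<Rightarrow> bool" where
  "inter_derives G H \<longleftrightarrow> (\<exists>k \<ge> 1. \<exists>\<alpha> :: nat \<Rightarrow> 'a \<Rightarrow> 'a.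
      (\<forall>i<k. inj_on (\<alpha> i) (fst G)) \<and> H = graph_Inter k (\<lambda>i. graph_image (\<alpha> i) G))"

end

theory Submission
  imports Defs "HOL-Combinatorics.Transposition"
begin

text \<open>Fix a vertex m of A that is not adjacent to v. Any two vertices a, m of A have the same
  neighbours outside {a, m, v}, because A is a clique or an independent set complete to B. Hence the
  transposition \<tau> of a and m maps every edge of H other than va to an edge of H, while it maps va
  to the non-edge vm; since \<tau> is an involution, H \<inter> H^\<tau> = H - va. Intersecting H with
  one such graph for every deleted edge va yields F.\<close>

lemma adj_commute: "adj G x y \<longleftrightarrow> adj G y x"
  by (simp add: adj_def insert_commute)

lemma edge_of_graph_image_involution:
  assumes "\<And>x. \<sigma> (\<sigma> x) = x"
  shows "e \<in> snd (graph_image \<sigma> G) \<longleftrightarrow> \<sigma> ` e \<in> snd G"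
proof -
  have inv: "\<sigma> ` \<sigma> ` e = e" for e
    by (simp add: image_image assms)
  show ?thesis
  proof
    assume "e \<in> snd (graph_image \<sigma> G)"
    then show "\<sigma> ` e \<in> snd G"
      unfolding graph_image_def using inv by auto
  next
    assume "\<sigma> ` e \<in> snd G"
    then have "\<sigma> ` \<sigma> ` e \<in> (\<lambda>e. \<sigma> ` e) ` snd G" by (rule imageI)
    then show "e \<in> snd (graph_image \<sigma> G)"
      unfolding graph_image_def inv by simp
  qed
qed

lemma INT_nth_eq_INT_set: "(\<Inter>i\<in>{..<length xs}. f (xs ! i)) = (\<Inter>x\<in>set xs. f x)"
proof -
  have "(\<lambda>i. xs ! i) ` {..<length xs} = set xs"
    by (auto simp: set_conv_nth)
  then show ?thesis
    by (metis image_image)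
qed

lemma inter_derives_finite_family:
  assumes "finite P" and "P \<noteq> {}" and "\<forall>\<alpha>\<in>P. inj_on \<alpha> (fst G)"
  shows "inter_derives G (\<Inter>\<alpha>\<in>P. fst (graph_image \<alpha> G), \<Inter>\<alpha>\<in>P. snd (graph_image \<alpha> G))"
proof -
  obtain \<alpha>s where \<alpha>s: "set \<alpha>s = P"
    using \<open>finite P\<close> finite_list by blast
  have "length \<alpha>s \<ge> 1"
    using \<alpha>s \<open>P \<noteq> {}\<close> by (cases \<alpha>s) auto
  moreover have "\<forall>i<length \<alpha>s. inj_on (\<alpha>s ! i) (fst G)"
    using \<alpha>s assms(3) nth_mem by blast
  moreover have "(\<Inter>\<alpha>\<in>P. fst (graph_image \<alpha> G), \<Inter>\<alpha>\<in>P. snd (graph_image \<alpha> G))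
      = graph_Inter (length \<alpha>s) (\<lambda>i. graph_image (\<alpha>s ! i) G)"
    unfolding graph_Inter_def \<alpha>s[symmetric]
    using INT_nth_eq_INT_set[of "\<lambda>\<alpha>. fst (graph_image \<alpha> G)" \<alpha>s]
      INT_nth_eq_INT_set[of "\<lambda>\<alpha>. snd (graph_image \<alpha> G)" \<alpha>s] by simp
  ultimately show ?thesis
    unfolding inter_derives_def by blast
qed

lemma transpose_image_edge:
  assumes "simple_graph G"
    and twins: "\<And>z. z \<in> fst G \<Longrightarrow> z \<notin> {a, m, v} \<Longrightarrow> adj G a z \<longleftrightarrow> adj G m z"
    and "\<not> adj G v m" and "e \<in> snd G" and "e \<noteq> {v, a}"
  shows "transpose a m ` e \<in> snd G"
proof -
  obtain x y where xy: "x \<noteq> y" "x \<in> fst G" "y \<in> fst G" "e = {x, y}"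
    using assms(1,4) unfolding simple_graph_def by blast
  have swapped: "adj G (transpose a m p) q"
    if "adj G p q" "q \<in> fst G" "q \<notin> {a, m}" "{p, q} \<noteq> {v, a}" for p q
  proof (cases "p \<in> {a, m}")
    case True
    then have "q \<noteq> v"
      using that assms(3) by (auto simp: adj_commute insert_commute)
    then show ?thesis
      using True that twins[of q] by auto
  next
    case False
    then show ?thesis
      using that by simp
  qed
  have "adj G x y"
    using xy \<open>e \<in> snd G\<close> by (simp add: adj_def)
  consider "x \<in> {a, m}" "y \<in> {a, m}" | "y \<notin> {a, m}" | "x \<notin> {a, m}"
    by blast
  then have "adj G (transpose a m x) (transpose a m y)"
  proof cases
    case 1
    then show ?thesis
      using \<open>adj G x y\<close> \<open>x \<noteq> y\<close> by (auto simp: adj_commute)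
  next
    case 2
    then show ?thesis
      using swapped[of x y] \<open>adj G x y\<close> xy assms(5) by simp
  next
    case 3
    then show ?thesis
      using swapped[of y x] \<open>adj G x y\<close> xy assms(5) by (simp add: adj_commute insert_commute)
  qed
  then show ?thesis
    using xy by (simp add: adj_def)
qed

lemma edges_inter_transpose_image:
  assumes "simple_graph G"
    and twins: "\<And>z. z \<in> fst G \<Longrightarrow> z \<notin> {a, m, v} \<Longrightarrow> adj G a z \<longleftrightarrow> adj G m z"
    and "\<not> adj G v m" and "v \<notin> {a, m}"
  shows "snd G \<inter> snd (graph_image (transpose a m) G) = snd G - {{v, a}}"
proof -
  have "transpose a m ` {v, a} = {v, m}"
    using \<open>v \<notin> {a, m}\<close> by auto
  then have "{v, a} \<notin> snd (graph_image (transpose a m) G)"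
    using \<open>\<not> adj G v m\<close> by (simp add: edge_of_graph_image_involution adj_def)
  moreover have "e \<in> snd (graph_image (transpose a m) G)" if "e \<in> snd G" "e \<noteq> {v, a}" for e
    using transpose_image_edge[OF assms(1-3) that]
    by (simp add: edge_of_graph_image_involution)
  ultimately show ?thesis
    by blast
qed

lemma adj_twins_in_homogeneous_set:
  assumes "independent_set G A \<or> clique G A" and "complete_to G A B"
    and "a \<in> A" and "m \<in> A" and "z \<in> A \<union> B" and "z \<notin> {a, m}"
  shows "adj G a z \<longleftrightarrow> adj G m z"
proof (cases "z \<in> A")
  case True
  then show ?thesis
    using assms(1,3,4,6) unfolding independent_set_def clique_def by auto
next
  case False
  then show ?thesis
    using assms(2-5) unfolding complete_to_def by auto
qed

lemma edges_inter_transpose_image_homogeneous: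
  assumes "simple_graph G" and "fst G = A \<union> B \<union> {v}" and "v \<notin> A"
    and "independent_set G A \<or> clique G A" and "complete_to G A B"
    and "a \<in> A" and "m \<in> A" and "\<not> adj G v m"
  shows "snd G \<inter> snd (graph_image (transpose a m) G) = snd G - {{v, a}}"
proof (rule edges_inter_transpose_image[OF assms(1) _ \<open>\<not> adj G v m\<close>])
  show "adj G a z \<longleftrightarrow> adj G m z" if "z \<in> fst G" "z \<notin> {a, m, v}" for z
    using adj_twins_in_homogeneous_set[OF assms(4-7)] that assms(2) by blast
  show "v \<notin> {a, m}"
    using assms(3,6,7) by blast
qed

theorem mainTheorem5:
  fixes H F :: "'a graph" and A B :: "'a set" and v :: 'a
  assumes "simple_graph H"
    and "fst H = A \<union> B \<union> {v}"
    and "A \<inter> B = {}" and "v \<notin> A" and "v \<notin> B"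
    and "independent_set H A \<or> clique H A"
    and "complete_to H A B"
    and "\<exists>a\<in>A. adj H v a"
    and "\<exists>a\<in>A. \<not> adj H v a"
    and "fst F = fst H"
    and "snd F \<subseteq> snd H"
    and "snd H - snd F \<subseteq> {{v, a} | a. a \<in> A}"
  shows "inter_derives H F"
proof -
  obtain m where "m \<in> A" and "\<not> adj H v m"
    using assms(9) by blast
  define R where "R = {a \<in> A. {v, a} \<notin> snd F}"
  define P where "P = insert id ((\<lambda>a. transpose a m) ` R)"
  have "finite P"
    using assms(1,2) unfolding P_def R_def simple_graph_def by (auto intro: finite_subset)
  have "transpose a m ` fst H = fst H" if "a \<in> R" for a
    using that \<open>m \<in> A\<close> assms(2) unfolding R_def by (intro transpose_image_eq) blast
  then have vertices: "(\<Inter>\<alpha>\<in>P. fst (graph_image \<alpha> H)) = fst F"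
    using assms(10) by (auto simp: P_def graph_image_def)
  have "(\<Inter>\<alpha>\<in>P. snd (graph_image \<alpha> H))
      = snd H \<inter> (\<Inter>a\<in>R. snd (graph_image (transpose a m) H))"
    by (simp add: P_def graph_image_def)
  also have "\<dots> = snd H - (\<lambda>a. {v, a}) ` R"
    using edges_inter_transpose_image_homogeneous[OF assms(1,2,4,6,7) _ \<open>m \<in> A\<close> \<open>\<not> adj H v m\<close>]
    unfolding R_def by blast
  also have "\<dots> = snd F"
    using assms(11,12) unfolding R_def by blast
  finally have "F = (\<Inter>\<alpha>\<in>P. fst (graph_image \<alpha> H), \<Inter>\<alpha>\<in>P. snd (graph_image \<alpha> H))"
    using vertices by simp
  then show ?thesis
    using inter_derives_finite_family[of P H] \<open>finite P\<close> by (simp add: P_def)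
qed

end
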